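(* Let $s,s'\in\mathbb C$, $f\in C_c^{\mathrm{lc}}(G/M)$ and $\gamma\in G$, and set $f_\gamma(gM)=f(\gamma^{-1}gM)$. Then for all $g\in G$, with $(\omega_1,\omega_2)=(g\omega_+,g\omega_-)$, $$(\mathcal R_{s,s'}f_\gamma)(\omega_1,\omega_2)=q^{(\frac12+is)\langle\gamma o,\omega_1\rangle}q^{(\frac12-i\overline{s'})\langle\gamma o,\omega_2\rangle}(\mathcal R_{s,s'}f)(\gamma^{-1}\omega_1,\gamma^{-1}\omega_2),$$ i.e. $(\mathcal R_{s,s'}f_\gamma)(gM\langle\tau\rangle)=q^{(\frac12+is)\langle\gamma o,g\omega_+\rangle}q^{(\frac12-i\overline{s'})\langle\gamma o,g\omega_-\rangle}(\mathcal R_{s,s'}f)(\gamma^{-1}gM\langle\tau\rangle)$.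
   Context: Let $q\ge2$, $\mathfrak G$ the $(q+1)$-regular tree with vertex set $\mathfrak X$, graph distance $d$, boundary $\Omega$ (infinite non-backtracking edge chains modulo eventual equality up to shift). Fix a vertex $o$ and $\omega_-\ne\omega_+$ with $o$ on the geodesic $]\omega_-,\omega_+[$; $\langle x,\omega\rangle=d(o,y)-d(x,y)$ where $[o,\omega)\cap[x,\omega)=[y,\omega)$. $G=\mathrm{Aut}(\mathfrak G)$, $K=\mathrm{Stab}_G(o)$, $B_{\omega_+}=\{g:g\omega_+=\omega_+,\ g\text{ fixes a vertex}\}$, $\tau\in G$ fixes $\omega_\pm$ and translates $]\omega_-,\omega_+[$ one step towards $\omega_+$; $g=kn\tau^j$ ($k\in K,n\in B_{\omega_+}$) with unique $j=:H(g)$. $r\in K$ with $r^2=\mathrm{id}$, $r\tau^jr^{-1}=\tau^{-j}$. $M=\{\gamma\in K:\gamma$ fixes $]\omega_-,\omega_+[$ pointwise$\}$. $G/M\cong\{(\omega,\omega',x):\omega\ne\omega',x\in]\omega,\omega'[\}$ via $gM\mapsto(g\omega_-,g\omega_+,go)$; $C_c^{\mathrm{lc}}(G/M)$ = locally constant compactly supported functions. With $d_{s,s'}(gM)=q^{(\frac12+is)H(g)}q^{(\frac12+is')H(gr)}$, the weighted Radon transform is $(\mathcal R_{s,s'}f)(gM\langle\tau\rangle)=\sum_{j\in\mathbb Z}f(g\tau^jM)d_{s,-\overline{s'}}(g\tau^jM)$; it is regarded as a function on pairs of distinct boundary points via $gM\langle\tau\rangle\leftrightarrow(g\omega_+,g\omega_-)$.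 *)

theory Defs
  imports "HOL-Analysis.Analysis"
begin

definition walk :: "('v \<Rightarrow> 'v \<Rightarrow> bool) \<Rightarrow> (nat \<Rightarrow> 'v) \<Rightarrow> nat \<Rightarrow> bool" where
  "walk E p n \<longleftrightarrow> (\<forall>i<n. E (p i) (p (Suc i)))"

definition nonbacktracking :: "(nat \<Rightarrow> 'v) \<Rightarrow> nat \<Rightarrow> bool" where
  "nonbacktracking p n \<longleftrightarrow> (\<forall>i. i + 2 \<le> n \<longrightarrow> p (i + 2) \<noteq> p i)"

definition regular_tree :: "('v \<Rightarrow> 'v \<Rightarrow> bool) \<Rightarrow> nat \<Rightarrow> bool" where
  "regular_tree E q \<longleftrightarrow>
     (\<forall>x y. E x y \<longrightarrow> E y x) \<and> (\<forall>x. \<not> E x x) \<and>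
     (\<forall>x y. \<exists>p n. p 0 = x \<and> p n = y \<and> walk E p n) \<and>
     (\<forall>p n. n \<ge> 1 \<longrightarrow> walk E p n \<longrightarrow> nonbacktracking p n \<longrightarrow> p 0 \<noteq> p n) \<and>
     (\<forall>x. finite {y. E x y} \<and> card {y. E x y} = q + 1)"

definition tdist :: "('v \<Rightarrow> 'v \<Rightarrow> bool) \<Rightarrow> 'v \<Rightarrow> 'v \<Rightarrow> nat" where
  "tdist E x y = (LEAST n. \<exists>p. p 0 = x \<and> p n = y \<and> walk E p n)"

definition is_ray :: "('v \<Rightarrow> 'v \<Rightarrow> bool) \<Rightarrow> (nat \<Rightarrow> 'v) \<Rightarrow> bool" where
  "is_ray E r \<longleftrightarrow> (\<forall>i. E (r i) (r (Suc i)) \<and> r (i + 2) \<noteq> r i)"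

definition ray_equiv :: "(nat \<Rightarrow> 'v) \<Rightarrow> (nat \<Rightarrow> 'v) \<Rightarrow> bool" where
  "ray_equiv r r' \<longleftrightarrow> (\<exists>k l. \<forall>i. r (i + k) = r' (i + l))"

definition boundary :: "('v \<Rightarrow> 'v \<Rightarrow> bool) \<Rightarrow> (nat \<Rightarrow> 'v) set set" where
  "boundary E = {{r'. is_ray E r' \<and> ray_equiv r r'} | r. is_ray E r}"

definition ray_from :: "'v \<Rightarrow> (nat \<Rightarrow> 'v) set \<Rightarrow> (nat \<Rightarrow> 'v)" where
  "ray_from x \<omega> = (THE r. r \<in> \<omega> \<and> r 0 = x)"

definition confluent :: "'v \<Rightarrow> 'v \<Rightarrow> (nat \<Rightarrow> 'v) set \<Rightarrow> 'v" where
  "confluent o' x \<omega> =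
     (THE y. range (ray_from y \<omega>) = range (ray_from o' \<omega>) \<inter> range (ray_from x \<omega>))"

text \<open>Horocycle bracket \<langle>x, omega\<rangle> = d(o,y) - d(x,y) relative to the base vertex o.\<close>
definition horo :: "('v \<Rightarrow> 'v \<Rightarrow> bool) \<Rightarrow> 'v \<Rightarrow> 'v \<Rightarrow> (nat \<Rightarrow> 'v) set \<Rightarrow> int" where
  "horo E o' x \<omega> = int (tdist E o' (confluent o' x \<omega>)) - int (tdist E x (confluent o' x \<omega>))"

definition geodesic :: "('v \<Rightarrow> 'v \<Rightarrow> bool) \<Rightarrow> (nat \<Rightarrow> 'v) set \<Rightarrow> (nat \<Rightarrow> 'v) set \<Rightarrow> 'v set" where
  "geodesic E \<omega> \<omega>' = {x. \<exists>p :: int \<Rightarrow> 'v.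
      (\<forall>i. E (p i) (p (i + 1)) \<and> p (i + 2) \<noteq> p i) \<and>
      (\<lambda>n. p (int n)) \<in> \<omega>' \<and> (\<lambda>n. p (- int n)) \<in> \<omega> \<and> x \<in> range p}"

definition Aut :: "('v \<Rightarrow> 'v \<Rightarrow> bool) \<Rightarrow> ('v \<Rightarrow> 'v) set" where
  "Aut E = {g. bij g \<and> (\<forall>x y. E x y \<longleftrightarrow> E (g x) (g y))}"

definition bact :: "('v \<Rightarrow> 'v) \<Rightarrow> (nat \<Rightarrow> 'v) set \<Rightarrow> (nat \<Rightarrow> 'v) set" where
  "bact g \<omega> = (\<lambda>r. g \<circ> r) ` \<omega>"

definition ipow :: "('v \<Rightarrow> 'v) \<Rightarrow> int \<Rightarrow> ('v \<Rightarrow> 'v)" where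
  "ipow t j = (if 0 \<le> j then t ^^ nat j else inv t ^^ nat (- j))"

definition Kgrp :: "('v \<Rightarrow> 'v \<Rightarrow> bool) \<Rightarrow> 'v \<Rightarrow> ('v \<Rightarrow> 'v) set" where
  "Kgrp E o' = {g \<in> Aut E. g o' = o'}"

definition Bgrp :: "('v \<Rightarrow> 'v \<Rightarrow> bool) \<Rightarrow> (nat \<Rightarrow> 'v) set \<Rightarrow> ('v \<Rightarrow> 'v) set" where
  "Bgrp E \<omega>p = {g \<in> Aut E. bact g \<omega>p = \<omega>p \<and> (\<exists>x. g x = x)}"

definition Hfun :: "('v \<Rightarrow> 'v \<Rightarrow> bool) \<Rightarrow> 'v \<Rightarrow> (nat \<Rightarrow> 'v) set \<Rightarrow> ('v \<Rightarrow> 'v) \<Rightarrow> ('v \<Rightarrow> 'v) \<Rightarrow> int" where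
  "Hfun E o' \<omega>p t g = (THE j. \<exists>k \<in> Kgrp E o'. \<exists>n \<in> Bgrp E \<omega>p. g = k \<circ> n \<circ> ipow t j)"

definition Mgrp :: "('v \<Rightarrow> 'v \<Rightarrow> bool) \<Rightarrow> 'v \<Rightarrow> (nat \<Rightarrow> 'v) set \<Rightarrow> (nat \<Rightarrow> 'v) set \<Rightarrow> ('v \<Rightarrow> 'v) set" where
  "Mgrp E o' \<omega>m \<omega>p = {g \<in> Kgrp E o'. \<forall>x \<in> geodesic E \<omega>m \<omega>p. g x = x}"

definition standard_setting ::
  "nat \<Rightarrow> ('v \<Rightarrow> 'v \<Rightarrow> bool) \<Rightarrow> 'v \<Rightarrow> (nat \<Rightarrow> 'v) set \<Rightarrow> (nat \<Rightarrow> 'v) set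
     \<Rightarrow> ('v \<Rightarrow> 'v) \<Rightarrow> ('v \<Rightarrow> 'v) \<Rightarrow> bool" where
  "standard_setting q E o' \<omega>m \<omega>p t r \<longleftrightarrow>
     q \<ge> 2 \<and> regular_tree E q \<and>
     \<omega>m \<in> boundary E \<and> \<omega>p \<in> boundary E \<and> \<omega>m \<noteq> \<omega>p \<and> o' \<in> geodesic E \<omega>m \<omega>p \<and>
     t \<in> Aut E \<and> bact t \<omega>m = \<omega>m \<and> bact t \<omega>p = \<omega>p \<and>
     (\<forall>x \<in> geodesic E \<omega>m \<omega>p. E x (t x) \<and> t x \<in> range (ray_from x \<omega>p)) \<and>
     r \<in> Kgrp E o' \<and> r \<circ> r = id \<and> (\<forall>j. r \<circ> ipow t j \<circ> inv r = ipow t (- j))"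

definition cosetM :: "('v \<Rightarrow> 'v) set \<Rightarrow> ('v \<Rightarrow> 'v) \<Rightarrow> ('v \<Rightarrow> 'v) set" where
  "cosetM M g = (\<lambda>m. g \<circ> m) ` M"

definition Gtop :: "('v \<Rightarrow> 'v \<Rightarrow> bool) \<Rightarrow> ('v \<Rightarrow> 'v) topology" where
  "Gtop E = subtopology (product_topology (\<lambda>_. discrete_topology UNIV) UNIV) (Aut E)"

definition qtop :: "'a topology \<Rightarrow> ('a \<Rightarrow> 'b) \<Rightarrow> 'b set \<Rightarrow> 'b topology" where
  "qtop X p Y = topology (\<lambda>U. U \<subseteq> Y \<and> openin X {x \<in> topspace X. p x \<in> U})"

lemma istopology_qtop: "istopology (\<lambda>U. U \<subseteq> Y \<and> openin X {x \<in> topspace X. p x \<in> U})"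
proof -
  have 1: "openin X {x \<in> topspace X. p x \<in> S \<inter> T}"
    if "openin X {x \<in> topspace X. p x \<in> S}" "openin X {x \<in> topspace X. p x \<in> T}" for S T
  proof -
    have "{x \<in> topspace X. p x \<in> S \<inter> T} =
          {x \<in> topspace X. p x \<in> S} \<inter> {x \<in> topspace X. p x \<in> T}" by blast
    then show ?thesis using that by auto
  qed
  have 2: "openin X {x \<in> topspace X. p x \<in> \<Union>\<K>}"
    if "\<forall>K\<in>\<K>. openin X {x \<in> topspace X. p x \<in> K}" for \<K>
  proof -
    have "{x \<in> topspace X. p x \<in> \<Union>\<K>} = (\<Union>K\<in>\<K>. {x \<in> topspace X. p x \<in> K})" by blast
    then show ?thesis using that by auto
  qed
  show ?thesis unfolding istopology_def using 1 2 by blast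
qed

definition GM :: "('v \<Rightarrow> 'v \<Rightarrow> bool) \<Rightarrow> ('v \<Rightarrow> 'v) set \<Rightarrow> ('v \<Rightarrow> 'v) set set" where
  "GM E M = cosetM M ` Aut E"

definition GMtop :: "('v \<Rightarrow> 'v \<Rightarrow> bool) \<Rightarrow> ('v \<Rightarrow> 'v) set \<Rightarrow> ('v \<Rightarrow> 'v) set topology" where
  "GMtop E M = qtop (Gtop E) (cosetM M) (GM E M)"

definition Cclc :: "('v \<Rightarrow> 'v \<Rightarrow> bool) \<Rightarrow> ('v \<Rightarrow> 'v) set \<Rightarrow> (('v \<Rightarrow> 'v) set \<Rightarrow> complex) set" where
  "Cclc E M = {f. (\<forall>c \<in> GM E M. \<exists>U. openin (GMtop E M) U \<and> c \<in> U \<and> (\<forall>c' \<in> U. f c' = f c)) \<and>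
                 compactin (GMtop E M) ((GMtop E M) closure_of {c \<in> GM E M. f c \<noteq> 0})}"

definition ltrans :: "('v \<Rightarrow> 'v) \<Rightarrow> (('v \<Rightarrow> 'v) set \<Rightarrow> complex) \<Rightarrow> (('v \<Rightarrow> 'v) set \<Rightarrow> complex)" where
  "ltrans \<gamma> f = (\<lambda>c. f ((\<lambda>h. inv \<gamma> \<circ> h) ` c))"

definition dfun :: "nat \<Rightarrow> ('v \<Rightarrow> 'v \<Rightarrow> bool) \<Rightarrow> 'v \<Rightarrow> (nat \<Rightarrow> 'v) set \<Rightarrow> ('v \<Rightarrow> 'v) \<Rightarrow> ('v \<Rightarrow> 'v)
     \<Rightarrow> complex \<Rightarrow> complex \<Rightarrow> ('v \<Rightarrow> 'v) \<Rightarrow> complex" where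
  "dfun q E o' \<omega>p t r s s' g =
     complex_of_real (real q) powr ((1/2 + \<i> * s) * of_int (Hfun E o' \<omega>p t g)) *
     complex_of_real (real q) powr ((1/2 + \<i> * s') * of_int (Hfun E o' \<omega>p t (g \<circ> r)))"

text \<open>(R_{s,s'} f)(gM<tau>) = sum_j f(g tau^j M) d_{s,-conj s'}(g tau^j M), as a function of g.\<close>
definition radon :: "nat \<Rightarrow> ('v \<Rightarrow> 'v \<Rightarrow> bool) \<Rightarrow> 'v \<Rightarrow> (nat \<Rightarrow> 'v) set \<Rightarrow> (nat \<Rightarrow> 'v) set
     \<Rightarrow> ('v \<Rightarrow> 'v) \<Rightarrow> ('v \<Rightarrow> 'v) \<Rightarrow> complex \<Rightarrow> complex \<Rightarrow> (('v \<Rightarrow> 'v) set \<Rightarrow> complex)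
     \<Rightarrow> ('v \<Rightarrow> 'v) \<Rightarrow> complex" where
  "radon q E o' \<omega>m \<omega>p t r s s' f g =
     (\<Sum>\<^sub>\<infinity> j::int. f (cosetM (Mgrp E o' \<omega>m \<omega>p) (g \<circ> ipow t j)) *
                   dfun q E o' \<omega>p t r s (- cnj s') (g \<circ> ipow t j))"

end

theory Submission
  imports Defs
begin

(* The horocycle bracket is a cocycle: <g x, g omega> = <x, omega> + <g o, g omega> for every
   automorphism g. With it one identifies the Iwasawa height as H(g) = <g o, g omega+>. Uniqueness
   holds because K preserves brackets, an element of B fixing a vertex has bracket 0 and
   <tau^j o, omega+> = j. Existence holds because K acts transitively on the boundary (an
   automorphism fixing o and carrying one ray from o onto another is built level by level from
   bijections between children, every vertex other than o having exactly q children) and because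
   an automorphism fixing omega+ with <n o, omega+> = 0 fixes a vertex of the ray from o.
   Consequently H(gamma h) = H(h) + <gamma o, gamma h omega+>. Applied to h = gamma^-1 g tau^j and
   to h r, where g tau^j omega+ = g omega+ and g tau^j r omega+ = g omega-, the weight
   d(g tau^j M) splits off a factor that does not depend on j and comes out of the sum. *)

lemma finite_same_card_bij_betw_point:
  assumes "finite A" "finite B" "card A = card B" "x \<in> A" "y \<in> B"
  shows "\<exists>\<beta>. bij_betw \<beta> A B \<and> \<beta> x = y"
proof -
  have "card (A - {x}) = card (B - {y})" using assms by simp
  then obtain h where h: "bij_betw h (A - {x}) (B - {y})"
    using finite_same_card_bij[of "A - {x}" "B - {y}"] assms(1,2) by blast
  then have "bij_betw (h(x := y)) (A - {x}) (B - {y})"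
    by (rule bij_betw_cong[THEN iffD1, rotated]) simp
  then have "bij_betw (h(x := y)) ((A - {x}) \<union> {x}) ((B - {y}) \<union> {y})"
    using notIn_Un_bij_betw3[of x "A - {x}" "h(x := y)" "B - {y}"] by simp
  moreover have "(A - {x}) \<union> {x} = A" "(B - {y}) \<union> {y} = B" using assms(4,5) by auto
  ultimately show ?thesis by (intro exI[of _ "h(x := y)"]) simp
qed

lemma ipow_uminus_comp:
  assumes "bij t" shows "ipow t (- j) \<circ> ipow t j = id"
proof (cases "0 \<le> j")
  case True
  then show ?thesis
    using inv_fn_o_fn_is_id[OF assms, of "nat j"] unfolding ipow_def by (cases "j = 0") (auto simp: id_def)
next
  case False
  then show ?thesis using fn_o_inv_fn_is_id[OF assms, of "nat (- j)"] unfolding ipow_def by (simp add: id_def)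
qed

lemma ipow_translate:
  assumes t: "bij t" and step: "\<And>i. t (p i) = p (i + 1)"
  shows "ipow t j (p i) = p (i + j)"
proof -
  have step_inv: "inv t (p i) = p (i - 1)" for i
    using inv_f_eq[OF bij_is_inj[OF t], of "p (i - 1)"] step[of "i - 1"] by simp
  have "(t ^^ n) (p i) = p (i + int n)" for n
    by (induction n) (auto simp: step algebra_simps)
  moreover have "(inv t ^^ n) (p i) = p (i - int n)" for n
    by (induction n) (auto simp: step_inv algebra_simps)
  ultimately show ?thesis unfolding ipow_def by simp
qed

lemma powr_of_int_add:
  "(x::complex) powr (c * of_int (a + b)) = x powr (c * of_int a) * x powr (c * of_int b)"
  by (simp add: distrib_left powr_add)

lemma walk_remove_turn:
  assumes p: "walk E p d" and i: "i + 2 \<le> d" and turn: "p (i + 2) = p i"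
  defines "p' \<equiv> \<lambda>j. if j \<le> i then p j else p (j + 2)"
  shows "walk E p' (d - 2)" "p' 0 = p 0" "p' (d - 2) = p d"
proof -
  show "walk E p' (d - 2)"
    unfolding walk_def
  proof (intro allI impI)
    fix j assume j: "j < d - 2"
    show "E (p' j) (p' (Suc j))"
    proof (cases "j < i")
      case True
      then show ?thesis using p j unfolding p'_def walk_def by auto
    next
      case False
      then have "E (p (j + 2)) (p (Suc (j + 2)))" using p j unfolding walk_def by auto
      then show ?thesis using False turn unfolding p'_def by (cases "j = i") auto
    qed
  qed
  show "p' 0 = p 0" unfolding p'_def by simp
  show "p' (d - 2) = p d"
  proof (cases "d - 2 \<le> i")
    case True
    then have "i + 2 = d" using i by linarith
    then show ?thesis using turn True unfolding p'_def by auto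
  next
    case False
    have "d - 2 + 2 = d" using i by simp
    then show ?thesis using False unfolding p'_def by simp
  qed
qed

locale regular_tree_graph =
  fixes E :: "'v \<Rightarrow> 'v \<Rightarrow> bool" and q :: nat
  assumes regular_tree: "regular_tree E q"
begin

lemma adj_sym: "E x y \<Longrightarrow> E y x"
  using regular_tree unfolding regular_tree_def by blast

lemma finite_neighbours: "finite {y. E x y}"
  and card_neighbours: "card {y. E x y} = q + 1"
  using regular_tree unfolding regular_tree_def by blast+

definition nb_walk :: "(nat \<Rightarrow> 'v) \<Rightarrow> nat \<Rightarrow> bool" where
  "nb_walk p n \<longleftrightarrow> walk E p n \<and> nonbacktracking p n"

lemma nb_walk_tl: "nb_walk p (Suc n) \<Longrightarrow> nb_walk (\<lambda>i. p (Suc i)) n"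
  unfolding nb_walk_def walk_def nonbacktracking_def by auto

lemma nb_walk_segment:
  "nb_walk p n \<Longrightarrow> i \<le> j \<Longrightarrow> j \<le> n \<Longrightarrow> nb_walk (\<lambda>k. p (i + k)) (j - i)"
  unfolding nb_walk_def walk_def nonbacktracking_def by (auto simp: add.assoc[symmetric])

lemma nb_walk_closed: "nb_walk p n \<Longrightarrow> p 0 = p n \<Longrightarrow> n = 0"
proof -
  assume "nb_walk p n" "p 0 = p n"
  moreover have "n \<ge> 1 \<Longrightarrow> walk E p n \<Longrightarrow> nonbacktracking p n \<Longrightarrow> p 0 \<noteq> p n"
    using regular_tree unfolding regular_tree_def by blast
  ultimately show "n = 0" unfolding nb_walk_def by linarith
qed

lemma nb_walk_snoc:
  assumes p: "nb_walk p n" and e: "E (p n) y" and nb: "n \<ge> 1 \<Longrightarrow> p (n - 1) \<noteq> y"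
  shows "nb_walk (\<lambda>i. if i \<le> n then p i else y) (Suc n)"
  unfolding nb_walk_def walk_def nonbacktracking_def
proof (intro conjI allI impI)
  fix i assume "i < Suc n"
  then show "E (if i \<le> n then p i else y) (if Suc i \<le> n then p (Suc i) else y)"
    using p e unfolding nb_walk_def walk_def by (cases "i = n") auto
next
  fix i assume i: "i + 2 \<le> Suc n"
  show "(if i + 2 \<le> n then p (i + 2) else y) \<noteq> (if i \<le> n then p i else y)"
  proof (cases "i + 2 \<le> n")
    case True
    then show ?thesis using p unfolding nb_walk_def nonbacktracking_def by auto
  next
    case False
    then have "i = n - 1" "n \<ge> 1" using i by auto
    then show ?thesis using nb False by auto
  qed
qed

lemma nb_walk_join:
  assumes p: "nb_walk p n" and p': "nb_walk p' m" and start: "p 0 = p' 0" and step: "p 1 \<noteq> p' 1"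
  shows "nb_walk (\<lambda>i. if i \<le> m then p' (m - i) else p (i - m)) (m + n)"
    (is "nb_walk ?w _")
  unfolding nb_walk_def walk_def nonbacktracking_def
proof (intro conjI allI impI)
  fix i assume i: "i < m + n"
  show "E (?w i) (?w (Suc i))"
  proof (cases "i < m")
    case True
    then have "E (p' (m - Suc i)) (p' (Suc (m - Suc i)))"
      using p' unfolding nb_walk_def walk_def by auto
    then show ?thesis using True by (auto intro: adj_sym simp: Suc_diff_Suc)
  next
    case False
    then have "E (p (i - m)) (p (Suc (i - m)))"
      using p i unfolding nb_walk_def walk_def by auto
    then show ?thesis using False start by (auto simp: Suc_diff_le)
  qed
next
  fix i assume i: "i + 2 \<le> m + n"
  consider "i + 2 \<le> m" | "i + 1 = m" | "m \<le> i" by linarith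
  then show "?w (i + 2) \<noteq> ?w i"
  proof cases
    case 1
    then have "p' ((m - (i + 2)) + 2) \<noteq> p' (m - (i + 2))"
      using p' unfolding nb_walk_def nonbacktracking_def by auto
    moreover have "(m - (i + 2)) + 2 = m - i" using 1 by simp
    ultimately show ?thesis using 1 by auto
  next
    case 2
    then show ?thesis using step by auto
  next
    case 3
    then have "p ((i - m) + 2) \<noteq> p (i - m)"
      using p i unfolding nb_walk_def nonbacktracking_def by auto
    moreover have "(i - m) + 2 = i + 2 - m" using 3 by simp
    ultimately show ?thesis using 3 start by auto
  qed
qed

lemma nb_walk_unique:
  "nb_walk p n \<Longrightarrow> nb_walk p' m \<Longrightarrow> p 0 = p' 0 \<Longrightarrow> p n = p' m \<Longrightarrow> n = m \<and> (\<forall>i\<le>n. p i = p' i)"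
proof (induction n arbitrary: p p' m)
  case 0
  then show ?case using nb_walk_closed[of p' m] by simp
next
  case (Suc n)
  show ?case
  proof (cases m)
    case 0
    then show ?thesis using Suc.prems nb_walk_closed[of p "Suc n"] by simp
  next
    case (Suc m')
    show ?thesis
    proof (cases "p 1 = p' 1")
      case True
      then have "n = m' \<and> (\<forall>i\<le>n. p (Suc i) = p' (Suc i))"
        using Suc.IH[of "\<lambda>i. p (Suc i)" "\<lambda>i. p' (Suc i)" m'] Suc.prems \<open>m = Suc m'\<close> nb_walk_tl
        by auto
      moreover have "p i = p' i" if "i \<le> Suc n" for i
        using calculation Suc.prems(3) that by (cases i) auto
      ultimately show ?thesis using \<open>m = Suc m'\<close> by simp
    next
      case False
      from nb_walk_closed[OF nb_walk_join[OF Suc.prems(1,2,3) False]] Suc.prems(4)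
      show ?thesis by simp
    qed
  qed
qed

lemma nb_walk_tdist_exists: "\<exists>p. p 0 = x \<and> p (tdist E x y) = y \<and> nb_walk p (tdist E x y)"
proof -
  define P where "P n \<longleftrightarrow> (\<exists>p. p 0 = x \<and> p n = y \<and> walk E p n)" for n
  define d where "d = tdist E x y"
  have d_Least: "d = (LEAST n. P n)" unfolding d_def tdist_def P_def by simp
  have "\<exists>n. P n" using regular_tree unfolding regular_tree_def P_def by blast
  then have "P d" using LeastI_ex d_Least by simp
  then obtain p where p: "p 0 = x" "p d = y" "walk E p d" unfolding P_def by blast
  have "nonbacktracking p d"
    unfolding nonbacktracking_def
  proof (intro allI impI notI)
    fix i assume "i + 2 \<le> d" "p (i + 2) = p i"
    note shortcut = walk_remove_turn[OF p(3) this]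
    have "P (d - 2)" unfolding P_def using shortcut p(1,2) by (intro exI[of _ "\<lambda>j. if j \<le> i then p j else p (j + 2)"]) simp
    then show False using \<open>i + 2 \<le> d\<close> d_Least not_less_Least[of "d - 2" P] by simp
  qed
  then show ?thesis using p d_def nb_walk_def by blast
qed

lemma tdist_nb_walk: "nb_walk p n \<Longrightarrow> tdist E (p 0) (p n) = n"
  using nb_walk_tdist_exists[of "p 0" "p n"] nb_walk_unique by metis

lemma tdist_adj: "E x y \<Longrightarrow> tdist E x y = 1"
  using tdist_nb_walk[of "\<lambda>k. if k = 0 then x else y" 1]
  unfolding nb_walk_def walk_def nonbacktracking_def by auto

section \<open>Rays and boundary points\<close>

lemma nb_walk_ray: "is_ray E r \<Longrightarrow> nb_walk (\<lambda>k. r (i + k)) n"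
  unfolding is_ray_def nb_walk_def walk_def nonbacktracking_def
  by (metis add.commute add_Suc_right add.left_commute)

lemma tdist_ray: "is_ray E r \<Longrightarrow> tdist E (r i) (r (i + n)) = n"
  using tdist_nb_walk[OF nb_walk_ray[of r i n]] by simp

lemma tdist_ray_0: "is_ray E r \<Longrightarrow> tdist E (r 0) (r n) = n"
  using tdist_ray[of r 0 n] by simp

lemma inj_ray: "is_ray E r \<Longrightarrow> inj r"
proof (rule injI)
  fix i j assume r: "is_ray E r" and eq: "r i = r j"
  have "tdist E (r (min i j)) (r (min i j + (max i j - min i j))) = max i j - min i j"
    using tdist_ray[OF r] by blast
  moreover have "tdist E (r (min i j)) (r (min i j)) = 0"
    using tdist_ray[OF r, of "min i j" 0] by simp
  ultimately show "i = j" using eq by (cases "i \<le> j") (auto simp: min_def max_def)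
qed

lemma is_ray_shift: "is_ray E r \<Longrightarrow> is_ray E (\<lambda>i. r (i + n))"
  unfolding is_ray_def by (metis add.commute add_Suc_right add.left_commute)

lemma ray_equiv_refl: "ray_equiv r r"
  unfolding ray_equiv_def by blast

lemma ray_equiv_sym: "ray_equiv r r' \<Longrightarrow> ray_equiv r' r"
  unfolding ray_equiv_def by metis

lemma ray_equiv_trans:
  assumes "ray_equiv r r'" "ray_equiv r' r''" shows "ray_equiv r r''"
proof -
  obtain k l k' l' where A: "\<forall>i. r (i + k) = r' (i + l)" and B: "\<forall>i. r' (i + k') = r'' (i + l')"
    using assms unfolding ray_equiv_def by blast
  have "r (i + (k + k')) = r'' (i + (l + l'))" for i
    using A[rule_format, of "i + k'"] B[rule_format, of "i + l"] by (simp add: ac_simps)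
  then show ?thesis unfolding ray_equiv_def by blast
qed

lemma ray_equiv_shift: "ray_equiv r (\<lambda>i. r (i + n))"
  unfolding ray_equiv_def by (rule exI[of _ n], rule exI[of _ 0]) simp

definition ray_class :: "(nat \<Rightarrow> 'v) \<Rightarrow> (nat \<Rightarrow> 'v) set" where
  "ray_class r = {r'. is_ray E r' \<and> ray_equiv r r'}"

lemma ray_class_boundary: "is_ray E r \<Longrightarrow> ray_class r \<in> boundary E"
  unfolding boundary_def ray_class_def by blast

lemma boundaryE:
  assumes "\<omega> \<in> boundary E" obtains r where "is_ray E r" "\<omega> = ray_class r"
  using assms unfolding boundary_def ray_class_def by blast

lemma boundary_is_ray: "\<omega> \<in> boundary E \<Longrightarrow> \<rho> \<in> \<omega> \<Longrightarrow> is_ray E \<rho>"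
  by (metis boundaryE mem_Collect_eq ray_class_def)

lemma boundary_eq_ray_class:
  assumes "\<omega> \<in> boundary E" "\<rho> \<in> \<omega>" shows "\<omega> = ray_class \<rho>"
proof -
  obtain r where r: "is_ray E r" "\<omega> = ray_class r" using assms(1) by (rule boundaryE)
  then have "ray_equiv r \<rho>" using assms(2) ray_class_def by blast
  then have "ray_equiv r x \<longleftrightarrow> ray_equiv \<rho> x" for x
    using ray_equiv_trans ray_equiv_sym by blast
  then show ?thesis using r(2) unfolding ray_class_def by blast
qed

lemma boundary_ray_equiv: "\<omega> \<in> boundary E \<Longrightarrow> \<rho> \<in> \<omega> \<Longrightarrow> \<rho>' \<in> \<omega> \<Longrightarrow> ray_equiv \<rho> \<rho>'"
  using boundary_eq_ray_class ray_class_def by blast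

lemma boundary_memI:
  "\<omega> \<in> boundary E \<Longrightarrow> \<rho> \<in> \<omega> \<Longrightarrow> is_ray E \<rho>' \<Longrightarrow> ray_equiv \<rho> \<rho>' \<Longrightarrow> \<rho>' \<in> \<omega>"
  using boundary_eq_ray_class ray_class_def by blast

lemma boundary_eqI: "\<omega> \<in> boundary E \<Longrightarrow> \<omega>' \<in> boundary E \<Longrightarrow> \<rho> \<in> \<omega> \<Longrightarrow> \<rho> \<in> \<omega>' \<Longrightarrow> \<omega> = \<omega>'"
  using boundary_eq_ray_class by metis

lemma boundary_shift: "\<omega> \<in> boundary E \<Longrightarrow> \<rho> \<in> \<omega> \<Longrightarrow> (\<lambda>i. \<rho> (i + n)) \<in> \<omega>"
  using boundary_memI boundary_is_ray is_ray_shift ray_equiv_shift by blast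

lemma boundary_ray_unique:
  assumes \<omega>: "\<omega> \<in> boundary E" and \<rho>: "\<rho> \<in> \<omega>" "\<rho>' \<in> \<omega>" and start: "\<rho> 0 = \<rho>' 0"
  shows "\<rho> = \<rho>'"
proof -
  obtain k l where kl: "\<forall>i. \<rho> (i + k) = \<rho>' (i + l)"
    using boundary_ray_equiv[OF \<omega> \<rho>] unfolding ray_equiv_def by blast
  have "nb_walk \<rho> k" "nb_walk \<rho>' l"
    using nb_walk_ray[of _ 0] boundary_is_ray[OF \<omega>] \<rho> by auto
  moreover have "\<rho> k = \<rho>' l" using kl[rule_format, of 0] by simp
  ultimately have "k = l" "\<forall>i\<le>k. \<rho> i = \<rho>' i" using nb_walk_unique start by blast+
  then have "\<rho> i = \<rho>' i" for i
    using kl[rule_format, of "i - k"] by (cases "i \<le> k") auto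
  then show ?thesis ..
qed

lemma ray_append:
  assumes w: "nb_walk w d" and a: "is_ray E a" and join: "w d = a j"
    and nb: "d \<ge> 1 \<Longrightarrow> w (d - 1) \<noteq> a (Suc j)"
  shows "is_ray E (\<lambda>i. if i \<le> d then w i else a (j + i - d))" (is "is_ray E ?\<rho>")
  unfolding is_ray_def
proof (intro allI conjI)
  fix i
  show "E (?\<rho> i) (?\<rho> (Suc i))"
  proof (cases "i < d")
    case True
    then show ?thesis using w unfolding nb_walk_def walk_def by auto
  next
    case False
    have "E (a (j + i - d)) (a (Suc (j + i - d)))" using a unfolding is_ray_def by blast
    then show ?thesis using False join by (auto simp: Suc_diff_le)
  qed
  consider "i + 2 \<le> d" | "i + 1 = d" | "d \<le> i" by linarith
  then show "?\<rho> (i + 2) \<noteq> ?\<rho> i"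
  proof cases
    case 1
    then show ?thesis using w unfolding nb_walk_def nonbacktracking_def by auto
  next
    case 2
    then show ?thesis using nb by auto
  next
    case 3
    have "a ((j + i - d) + 2) \<noteq> a (j + i - d)" using a unfolding is_ray_def by blast
    moreover have "(j + i - d) + 2 = j + (i + 2) - d" using 3 by simp
    ultimately show ?thesis using 3 join by auto
  qed
qed

lemma boundary_ray_exists:
  assumes \<omega>: "\<omega> \<in> boundary E" shows "\<exists>\<rho>\<in>\<omega>. \<rho> 0 = x"
proof -
  obtain a where a: "is_ray E a" "\<omega> = ray_class a" using \<omega> by (rule boundaryE)
  have "a \<in> \<omega>" using a ray_equiv_refl ray_class_def by blast
  \<comment> \<open>join x to a vertex of a nearest to x; minimality rules out backtracking at the junction\<close>
  define d where "d = (LEAST d. \<exists>j. tdist E x (a j) = d)"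
  have "\<exists>j. tdist E x (a j) = d" unfolding d_def by (rule LeastI_ex) blast
  then obtain j where j: "tdist E x (a j) = d" ..
  have d_min: "d \<le> tdist E x (a j')" for j' unfolding d_def by (rule Least_le) blast
  obtain w where w: "w 0 = x" "w d = a j" "nb_walk w d" using nb_walk_tdist_exists[of x "a j"] j by metis
  have no_turn: "w (d - 1) \<noteq> a (Suc j)" if "d \<ge> 1"
  proof
    assume "w (d - 1) = a (Suc j)"
    then have "tdist E x (a (Suc j)) = d - 1"
      using tdist_nb_walk[OF nb_walk_segment[OF w(3), of 0 "d - 1"]] w(1) by simp
    then show False using d_min[of "Suc j"] that by simp
  qed
  have ray: "is_ray E (\<lambda>i. if i \<le> d then w i else a (j + i - d))"
    using ray_append[OF w(3) a(1) w(2)] no_turn by blast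
  have "ray_equiv a (\<lambda>i. if i \<le> d then w i else a (j + i - d))"
    unfolding ray_equiv_def by (rule exI[of _ j], rule exI[of _ d]) (auto simp: w(2) add.commute)
  then have "(\<lambda>i. if i \<le> d then w i else a (j + i - d)) \<in> \<omega>"
    using boundary_memI[OF \<omega> \<open>a \<in> \<omega>\<close> ray] by blast
  then show ?thesis using w(1) by (intro bexI) auto
qed

lemma
  assumes "\<omega> \<in> boundary E"
  shows ray_from_in_boundary: "ray_from x \<omega> \<in> \<omega>"
    and ray_from_0: "ray_from x \<omega> 0 = x"
    and is_ray_ray_from: "is_ray E (ray_from x \<omega>)"
proof -
  obtain \<rho> where \<rho>: "\<rho> \<in> \<omega>" "\<rho> 0 = x" using boundary_ray_exists[OF assms] by blast
  have "ray_from x \<omega> = \<rho>"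
    unfolding ray_from_def using \<rho> boundary_ray_unique[OF assms] by (intro the_equality) auto
  then show "ray_from x \<omega> \<in> \<omega>" "ray_from x \<omega> 0 = x" "is_ray E (ray_from x \<omega>)"
    using \<rho> boundary_is_ray[OF assms] by auto
qed

lemma ray_from_eq: "\<omega> \<in> boundary E \<Longrightarrow> \<rho> \<in> \<omega> \<Longrightarrow> \<rho> 0 = x \<Longrightarrow> ray_from x \<omega> = \<rho>"
  using ray_from_in_boundary ray_from_0 boundary_ray_unique by metis

lemma ray_from_shift: "\<omega> \<in> boundary E \<Longrightarrow> \<rho> \<in> \<omega> \<Longrightarrow> ray_from (\<rho> n) \<omega> = (\<lambda>i. \<rho> (i + n))"
  using ray_from_eq boundary_shift by simp

lemma ray_from_range_inj:
  assumes \<omega>: "\<omega> \<in> boundary E" and eq: "range (ray_from y \<omega>) = range (ray_from y' \<omega>)"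
  shows "y = y'"
proof -
  let ?r = "ray_from y \<omega>" and ?r' = "ray_from y' \<omega>"
  obtain n where n: "y = ?r' n" using eq ray_from_0[OF \<omega>, of y] by (metis rangeE rangeI)
  obtain m where m: "y' = ?r m" using eq ray_from_0[OF \<omega>, of y'] by (metis rangeE rangeI)
  have "?r = (\<lambda>i. ?r' (i + n))"
    using ray_from_shift[OF \<omega> ray_from_in_boundary[OF \<omega>, of y'], of n] n by simp
  then have "?r' 0 = ?r' (m + n)" using m ray_from_0[OF \<omega>, of y'] by (metis fun_cong)
  then have "m + n = 0" using inj_ray[OF is_ray_ray_from[OF \<omega>]] by (metis injD)
  then show ?thesis using n ray_from_0[OF \<omega>, of y'] by simp
qed

definition is_line :: "(int \<Rightarrow> 'v) \<Rightarrow> bool" where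
  "is_line p \<longleftrightarrow> (\<forall>i. E (p i) (p (i + 1)) \<and> p (i + 2) \<noteq> p i)"

lemma is_ray_line:
  assumes "is_line p" shows "is_ray E (\<lambda>n. p (i + int n))"
  unfolding is_ray_def
proof
  fix n
  have "E (p (i + int n)) (p (i + int n + 1)) \<and> p (i + int n + 2) \<noteq> p (i + int n)"
    using assms unfolding is_line_def by blast
  then show "E (p (i + int n)) (p (i + int (Suc n))) \<and> p (i + int (n + 2)) \<noteq> p (i + int n)"
    by (simp add: algebra_simps)
qed

lemma is_line_shift: "is_line p \<Longrightarrow> is_line (\<lambda>i. p (m + i))"
  unfolding is_line_def by (metis add.assoc add.commute)

lemma is_line_reverse: "is_line p \<Longrightarrow> is_line (\<lambda>i. p (- i))"
  unfolding is_line_def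
proof (intro allI conjI)
  fix i assume p: "\<forall>i. E (p i) (p (i + 1)) \<and> p (i + 2) \<noteq> p i"
  show "E (p (- i)) (p (- (i + 1)))" using p[rule_format, of "- i - 1"] adj_sym by simp
  show "p (- (i + 2)) \<noteq> p (- i)" using p[rule_format, of "- i - 2"] by (auto simp: algebra_simps)
qed

lemma line_tail_in_boundary:
  assumes \<omega>: "\<omega> \<in> boundary E" and p: "is_line p" "(\<lambda>n. p (int n)) \<in> \<omega>"
  shows "(\<lambda>n. p (i + int n)) \<in> \<omega>"
proof -
  have "\<forall>n. p (int (n + nat i)) = p (i + int (n + nat (- i)))"
    by (simp add: algebra_simps)
  then have "ray_equiv (\<lambda>n. p (int n)) (\<lambda>n. p (i + int n))"
    unfolding ray_equiv_def by blast
  then show ?thesis using boundary_memI[OF \<omega> p(2) is_ray_line[OF p(1)]] by blast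
qed

section \<open>Horocycle brackets and automorphisms\<close>

lemma confluent_eqI:
  assumes "\<omega> \<in> boundary E"
    and "range (ray_from y \<omega>) = range (ray_from o' \<omega>) \<inter> range (ray_from x \<omega>)"
  shows "confluent o' x \<omega> = y"
  unfolding confluent_def using assms ray_from_range_inj by (intro the_equality) auto

lemma range_first_common_tail:
  assumes \<omega>: "\<omega> \<in> boundary E" "a \<in> \<omega>" "b \<in> \<omega>" and kl: "\<forall>i. a (i + k) = b (i + l)"
    and least: "\<And>k' l'. \<forall>i. a (i + k') = b (i + l') \<Longrightarrow> k \<le> k'"
  shows "range (ray_from (a k) \<omega>) = range a \<inter> range b"
proof
  have tail: "ray_from (a m) \<omega> = (\<lambda>i. a (i + m))" for m
    using ray_from_shift[OF \<omega>(1,2)] by simp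
  show "range (ray_from (a k) \<omega>) \<subseteq> range a \<inter> range b"
  proof
    fix z assume "z \<in> range (ray_from (a k) \<omega>)"
    then obtain i where "z = a (i + k)" unfolding tail by blast
    then show "z \<in> range a \<inter> range b" using kl by (metis IntI rangeI)
  qed
  show "range a \<inter> range b \<subseteq> range (ray_from (a k) \<omega>)"
  proof
    fix z assume "z \<in> range a \<inter> range b"
    then obtain m m' where z: "z = a m" "z = b m'" by blast
    have "\<forall>i. a (i + m) = b (i + m')"
      using tail[of m] ray_from_shift[OF \<omega>(1,3), of m'] z by (metis fun_cong)
    then have "k \<le> m" using least by blast
    then have "z = a ((m - k) + k)" using z by simp
    then show "z \<in> range (ray_from (a k) \<omega>)" unfolding tail by blast
  qed
qed

lemma horo_eq_offset:
  assumes \<omega>: "\<omega> \<in> boundary E" and kl: "\<forall>i. ray_from o' \<omega> (i + k) = ray_from x \<omega> (i + l)"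
  shows "horo E o' x \<omega> = int k - int l"
proof -
  define a where "a = ray_from o' \<omega>"
  define b where "b = ray_from x \<omega>"
  have a: "a \<in> \<omega>" "a 0 = o'" "is_ray E a"
    unfolding a_def using ray_from_in_boundary ray_from_0 is_ray_ray_from \<omega> by auto
  have b: "b \<in> \<omega>" "b 0 = x" "is_ray E b"
    unfolding b_def using ray_from_in_boundary ray_from_0 is_ray_ray_from \<omega> by auto
  define P where "P k' \<longleftrightarrow> (\<exists>l'. \<forall>i. a (i + k') = b (i + l'))" for k'
  define k0 where "k0 = (LEAST k'. P k')"
  have "P k" using kl unfolding P_def a_def b_def by blast
  then have "P k0" and k0_le: "k0 \<le> k" unfolding k0_def by (auto intro: LeastI Least_le)
  then obtain l0 where l0: "\<forall>i. a (i + k0) = b (i + l0)" unfolding P_def by blast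
  have "range (ray_from (a k0) \<omega>) = range a \<inter> range b"
    using range_first_common_tail[OF \<omega> a(1) b(1) l0] Least_le[of P] unfolding k0_def P_def by blast
  then have conf: "confluent o' x \<omega> = a k0"
    using confluent_eqI[OF \<omega>] unfolding a_def b_def by blast
  have d1: "tdist E o' (a k0) = k0" using tdist_ray_0[OF a(3), of k0] a(2) by simp
  have d2: "tdist E x (a k0) = l0" using tdist_ray_0[OF b(3), of l0] b(2) l0 by (metis add_0)
  have "b l = b ((k - k0) + l0)"
    using l0[rule_format, of "k - k0"] kl k0_le unfolding a_def b_def by (metis add_0 le_add_diff_inverse2)
  then have "l = (k - k0) + l0" using inj_ray[OF b(3)] by (metis injD)
  then show ?thesis unfolding horo_def conf d1 d2 using k0_le by simp
qed

lemma horo_self: "\<omega> \<in> boundary E \<Longrightarrow> horo E o' o' \<omega> = 0"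
  using horo_eq_offset[of \<omega> o' 0 o' 0] by simp

lemma aut_adj: "g \<in> Aut E \<Longrightarrow> E x y \<longleftrightarrow> E (g x) (g y)"
  unfolding Aut_def by blast

lemma bij_aut: "g \<in> Aut E \<Longrightarrow> bij g"
  unfolding Aut_def by blast

lemma aut_id: "id \<in> Aut E"
  unfolding Aut_def by simp

lemma aut_comp: "g \<in> Aut E \<Longrightarrow> h \<in> Aut E \<Longrightarrow> g \<circ> h \<in> Aut E"
  unfolding Aut_def using bij_comp by fastforce

lemma aut_inv:
  assumes g: "g \<in> Aut E" shows "inv g \<in> Aut E"
proof -
  have "surj g" using bij_aut[OF g] bij_is_surj by blast
  then have "E x y \<longleftrightarrow> E (inv g x) (inv g y)" for x y
    using aut_adj[OF g, of "inv g x" "inv g y"] by (simp add: surj_f_inv_f)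
  then show ?thesis unfolding Aut_def using bij_imp_bij_inv[OF bij_aut[OF g]] by blast
qed

lemma inv_comp_aut: "g \<in> Aut E \<Longrightarrow> inv g \<circ> g = id"
  by (rule inv_o_cancel[OF bij_is_inj[OF bij_aut]])

lemma comp_inv_aut: "g \<in> Aut E \<Longrightarrow> g \<circ> inv g = id"
  by (rule surj_iff[THEN iffD1, OF bij_is_surj[OF bij_aut]])

lemma is_ray_comp_aut:
  assumes g: "g \<in> Aut E" and r: "is_ray E r" shows "is_ray E (g \<circ> r)"
  using r aut_adj[OF g] bij_is_inj[OF bij_aut[OF g]] unfolding is_ray_def by (simp add: inj_eq)

lemma ray_equiv_comp: "ray_equiv r r' \<Longrightarrow> ray_equiv (g \<circ> r) (g \<circ> r')"
  unfolding ray_equiv_def comp_def by metis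

lemma comp_in_bact: "\<rho> \<in> \<omega> \<Longrightarrow> g \<circ> \<rho> \<in> bact g \<omega>"
  unfolding bact_def by blast

lemma bact_comp: "bact (f \<circ> g) \<omega> = bact f (bact g \<omega>)"
  unfolding bact_def by (auto simp: image_image o_assoc)

lemma bact_id: "bact id \<omega> = \<omega>"
  unfolding bact_def by simp

lemma bact_inv_cancel: "g \<in> Aut E \<Longrightarrow> bact (inv g) (bact g \<omega>) = \<omega>"
  using inv_comp_aut by (simp add: bact_comp[symmetric] bact_id)

lemma aut_funpow: "f \<in> Aut E \<Longrightarrow> f ^^ n \<in> Aut E"
  by (induction n) (auto simp: aut_id aut_comp)

lemma aut_ipow: "t \<in> Aut E \<Longrightarrow> ipow t j \<in> Aut E"
  unfolding ipow_def using aut_funpow aut_inv by auto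

lemma bact_funpow: "bact f \<omega> = \<omega> \<Longrightarrow> bact (f ^^ n) \<omega> = \<omega>"
  by (induction n) (auto simp: bact_id bact_comp)

lemma bact_ipow:
  assumes t: "t \<in> Aut E" and fixed: "bact t \<omega> = \<omega>" shows "bact (ipow t j) \<omega> = \<omega>"
proof -
  have "bact (inv t) \<omega> = \<omega>" using bact_inv_cancel[OF t, of \<omega>] fixed by simp
  then show ?thesis unfolding ipow_def using bact_funpow[of t \<omega>] bact_funpow[of "inv t" \<omega>] fixed by simp
qed

lemma bact_ray_class:
  assumes g: "g \<in> Aut E" and r: "is_ray E r" shows "bact g (ray_class r) = ray_class (g \<circ> r)"
proof
  show "bact g (ray_class r) \<subseteq> ray_class (g \<circ> r)"
    unfolding bact_def ray_class_def using is_ray_comp_aut[OF g] ray_equiv_comp by blast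
  show "ray_class (g \<circ> r) \<subseteq> bact g (ray_class r)"
  proof
    fix s assume s: "s \<in> ray_class (g \<circ> r)"
    have "inv g \<circ> s \<in> ray_class r"
      using is_ray_comp_aut[OF aut_inv[OF g]] ray_equiv_comp[of "g \<circ> r" s "inv g"] s
        inv_comp_aut[OF g] unfolding ray_class_def by (auto simp: o_assoc)
    moreover have "s = g \<circ> (inv g \<circ> s)" using comp_inv_aut[OF g] by (simp add: o_assoc)
    ultimately show "s \<in> bact g (ray_class r)" unfolding bact_def by blast
  qed
qed

lemma bact_boundary:
  assumes g: "g \<in> Aut E" and \<omega>: "\<omega> \<in> boundary E" shows "bact g \<omega> \<in> boundary E"
proof -
  obtain r where "is_ray E r" "\<omega> = ray_class r" using \<omega> by (rule boundaryE)
  then show ?thesis using bact_ray_class[OF g] ray_class_boundary is_ray_comp_aut[OF g] by simp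
qed

lemma ray_from_bact:
  "g \<in> Aut E \<Longrightarrow> \<omega> \<in> boundary E \<Longrightarrow> ray_from (g x) (bact g \<omega>) = g \<circ> ray_from x \<omega>"
  using ray_from_eq[OF bact_boundary comp_in_bact[OF ray_from_in_boundary]] ray_from_0 by simp

lemma horo_cocycle:
  assumes g: "g \<in> Aut E" and \<omega>: "\<omega> \<in> boundary E"
  shows "horo E o' (g x) (bact g \<omega>) = horo E o' x \<omega> + horo E o' (g o') (bact g \<omega>)"
proof -
  have g\<omega>: "bact g \<omega> \<in> boundary E" using bact_boundary[OF g \<omega>] .
  obtain k l where kl: "\<forall>i. ray_from o' \<omega> (i + k) = ray_from x \<omega> (i + l)"
    using boundary_ray_equiv[OF \<omega> ray_from_in_boundary[OF \<omega>] ray_from_in_boundary[OF \<omega>]]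
    unfolding ray_equiv_def by blast
  obtain m n where mn: "\<forall>i. ray_from o' (bact g \<omega>) (i + m) = ray_from (g o') (bact g \<omega>) (i + n)"
    using boundary_ray_equiv[OF g\<omega> ray_from_in_boundary[OF g\<omega>] ray_from_in_boundary[OF g\<omega>]]
    unfolding ray_equiv_def by blast
  have "\<forall>i. ray_from o' (bact g \<omega>) (i + (m + k)) = ray_from (g x) (bact g \<omega>) (i + (l + n))"
  proof
    fix i
    have "ray_from o' (bact g \<omega>) (i + (m + k)) = ray_from (g o') (bact g \<omega>) ((i + k) + n)"
      using mn[rule_format, of "i + k"] by (simp add: ac_simps)
    also have "\<dots> = g (ray_from x \<omega> ((i + n) + l))"
      using ray_from_bact[OF g \<omega>] kl[rule_format, of "i + n"] by (simp add: ac_simps)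
    also have "\<dots> = ray_from (g x) (bact g \<omega>) (i + (l + n))"
      using ray_from_bact[OF g \<omega>] by (simp add: ac_simps)
    finally show "ray_from o' (bact g \<omega>) (i + (m + k)) = ray_from (g x) (bact g \<omega>) (i + (l + n))" .
  qed
  from horo_eq_offset[OF g\<omega> this] show ?thesis
    using horo_eq_offset[OF \<omega> kl] horo_eq_offset[OF g\<omega> mn] by simp
qed

lemma horo_stabiliser:
  assumes k: "k \<in> Aut E" "k o' = o'" and \<omega>: "\<omega> \<in> boundary E"
  shows "horo E o' (k y) (bact k \<omega>) = horo E o' y \<omega>"
  using horo_cocycle[OF k(1) \<omega>, of o' y] k(2) horo_self[OF bact_boundary[OF k(1) \<omega>]] by simp

lemma horo_fixed_point:
  assumes n: "n \<in> Aut E" "n x = x" and \<omega>: "\<omega> \<in> boundary E" "bact n \<omega> = \<omega>"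
  shows "horo E o' (n o') \<omega> = 0"
  using horo_cocycle[OF n(1) \<omega>(1), of o' x] n(2) \<omega>(2) by simp

lemma fixed_point_if_horo_zero:
  assumes n: "n \<in> Aut E" and \<omega>: "\<omega> \<in> boundary E" "bact n \<omega> = \<omega>"
    and horo: "horo E o' (n o') \<omega> = 0"
  shows "\<exists>x. n x = x"
proof -
  define a where "a = ray_from o' \<omega>"
  have na: "ray_from (n o') \<omega> = n \<circ> a" using ray_from_bact[OF n \<omega>(1), of o'] \<omega>(2) a_def by simp
  obtain k l where kl: "\<forall>i. a (i + k) = ray_from (n o') \<omega> (i + l)"
    using boundary_ray_equiv[OF \<omega>(1) ray_from_in_boundary[OF \<omega>(1)] ray_from_in_boundary[OF \<omega>(1)]]
    unfolding a_def ray_equiv_def by blast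
  then have "k = l" using horo_eq_offset[OF \<omega>(1)] horo unfolding a_def by fastforce
  then have "n (a k) = a k" using kl[rule_format, of 0] na by simp
  then show ?thesis by blast
qed

section \<open>The vertex stabiliser acts transitively on the boundary\<close>

lemma tdist_self [simp]: "tdist E x x = 0"
  using tdist_nb_walk[of "\<lambda>_. x" 0] unfolding nb_walk_def walk_def nonbacktracking_def by simp

lemma tdist_eq_0_iff: "tdist E x v = 0 \<longleftrightarrow> v = x"
proof
  assume "tdist E x v = 0"
  moreover obtain p where "p 0 = x" "p (tdist E x v) = v" using nb_walk_tdist_exists by blast
  ultimately show "v = x" by simp
next
  assume "v = x"
  then show "tdist E x v = 0" by simp
qed

context
  fixes o' :: 'v
begin

lemma tdist_adj_cases:
  assumes "E x y" shows "tdist E o' y = tdist E o' x + 1 \<or> tdist E o' x = tdist E o' y + 1"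
proof -
  define n where "n = tdist E o' x"
  obtain p where p: "p 0 = o'" "p n = x" "nb_walk p n" using nb_walk_tdist_exists n_def by blast
  show ?thesis
  proof (cases "n \<ge> 1 \<and> p (n - 1) = y")
    case True
    then have "tdist E o' y = n - 1"
      using tdist_nb_walk[OF nb_walk_segment[OF p(3), of 0 "n - 1"]] p(1) by simp
    then show ?thesis using True n_def by simp
  next
    case False
    then have "nb_walk (\<lambda>i. if i \<le> n then p i else y) (Suc n)"
      using nb_walk_snoc[OF p(3)] p(2) assms by blast
    then have "tdist E o' y = Suc n" using tdist_nb_walk p(1) by fastforce
    then show ?thesis using n_def by simp
  qed
qed

definition parent :: "'v \<Rightarrow> 'v" where
  "parent v = (SOME u. E u v \<and> tdist E o' u + 1 = tdist E o' v)"

lemma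
  assumes "v \<noteq> o'"
  shows adj_parent: "E (parent v) v"
    and tdist_parent: "tdist E o' (parent v) + 1 = tdist E o' v"
proof -
  obtain p where p: "p 0 = o'" "p (tdist E o' v) = v" "nb_walk p (tdist E o' v)"
    using nb_walk_tdist_exists by blast
  obtain m where m: "tdist E o' v = Suc m" using assms tdist_eq_0_iff not0_implies_Suc by blast
  have "E (p m) v" using p(2,3) m unfolding nb_walk_def walk_def by (metis lessI)
  moreover have "tdist E o' (p m) = m"
    using tdist_nb_walk[OF nb_walk_segment[OF p(3), of 0 m]] p(1) m by simp
  ultimately have "\<exists>u. E u v \<and> tdist E o' u + 1 = tdist E o' v" using m by auto
  then have "E (parent v) v \<and> tdist E o' (parent v) + 1 = tdist E o' v"
    unfolding parent_def by (rule someI_ex)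
  then show "E (parent v) v" "tdist E o' (parent v) + 1 = tdist E o' v" by auto
qed

lemma nb_walk_through_adj:
  assumes "E u v" "tdist E o' v = tdist E o' u + 1"
  shows "\<exists>p. p 0 = o' \<and> nb_walk p (tdist E o' v) \<and> p (tdist E o' v) = v \<and> p (tdist E o' u) = u"
proof -
  define n where "n = tdist E o' u"
  obtain p where p: "p 0 = o'" "p n = u" "nb_walk p n" using nb_walk_tdist_exists n_def by blast
  have "p (n - 1) \<noteq> v" if "n \<ge> 1"
  proof -
    have "tdist E o' (p (n - 1)) = n - 1"
      using tdist_nb_walk[OF nb_walk_segment[OF p(3), of 0 "n - 1"]] p(1) by simp
    then show ?thesis using assms(2) n_def by auto
  qed
  then have "nb_walk (\<lambda>i. if i \<le> n then p i else v) (Suc n)"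
    using nb_walk_snoc[OF p(3)] p(2) assms(1) by blast
  then show ?thesis using p assms(2) n_def by (intro exI[of _ "\<lambda>i. if i \<le> n then p i else v"]) auto
qed

lemma parent_eqI:
  assumes "E u v" "tdist E o' u + 1 = tdist E o' v" shows "parent v = u"
proof -
  have v: "v \<noteq> o'" using assms(2) tdist_eq_0_iff by auto
  have same_level: "tdist E o' (parent v) = tdist E o' u" using assms(2) tdist_parent[OF v] by simp
  obtain p where p: "p 0 = o'" "nb_walk p (tdist E o' v)" "p (tdist E o' v) = v" "p (tdist E o' u) = u"
    using nb_walk_through_adj assms by force
  obtain p' where p': "p' 0 = o'" "nb_walk p' (tdist E o' v)" "p' (tdist E o' v) = v"
      "p' (tdist E o' u) = parent v"
    using nb_walk_through_adj[OF adj_parent[OF v]] tdist_parent[OF v] same_level by force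
  have "\<forall>i\<le>tdist E o' v. p i = p' i" using nb_walk_unique[OF p(2) p'(2)] p p' by simp
  then show ?thesis using p(4) p'(4) assms(2) by (metis le_add1)
qed

lemma adj_iff_parent: "E x y \<longleftrightarrow> (y \<noteq> o' \<and> parent y = x) \<or> (x \<noteq> o' \<and> parent x = y)"
proof
  assume e: "E x y"
  show "(y \<noteq> o' \<and> parent y = x) \<or> (x \<noteq> o' \<and> parent x = y)"
    using tdist_adj_cases[OF e] parent_eqI[OF e] parent_eqI[OF adj_sym[OF e]] tdist_eq_0_iff
    by (metis add_eq_0_iff_both_eq_0 zero_neq_one)
next
  assume "(y \<noteq> o' \<and> parent y = x) \<or> (x \<noteq> o' \<and> parent x = y)"
  then show "E x y" using adj_parent adj_sym by blast
qed

definition children :: "'v \<Rightarrow> 'v set" where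
  "children u = {v. E u v \<and> tdist E o' v = tdist E o' u + 1}"

lemma mem_children_iff: "v \<in> children u \<longleftrightarrow> v \<noteq> o' \<and> parent v = u"
  unfolding children_def using parent_eqI tdist_eq_0_iff adj_parent tdist_parent by force

lemma finite_children: "finite (children u)"
  unfolding children_def using finite_neighbours[of u] by (rule rev_finite_subset) auto

lemma card_children: "card (children u) = (if u = o' then q + 1 else q)"
proof (cases "u = o'")
  case True
  then have "children u = {v. E u v}"
    unfolding children_def using tdist_adj_cases tdist_eq_0_iff by fastforce
  then show ?thesis using card_neighbours True by simp
next
  case False
  then have "children u = {v. E u v} - {parent u}"
    unfolding children_def using tdist_adj_cases parent_eqI tdist_parent adj_sym by fastforce
  moreover have "parent u \<in> {v. E u v}" using adj_parent[OF False] adj_sym by simp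
  ultimately show ?thesis using finite_neighbours card_neighbours False by simp
qed

lemma ray_from_root:
  assumes a: "is_ray E a" "a 0 = o'"
  shows "tdist E o' (a i) = i" and "a (Suc i) \<in> children (a i)"
proof -
  show "tdist E o' (a i) = i" for i using tdist_ray_0[OF a(1)] a(2) by simp
  moreover have "E (a i) (a (Suc i))" using a(1) unfolding is_ray_def by blast
  ultimately show "a (Suc i) \<in> children (a i)" unfolding children_def by simp
qed

definition child_matching :: "(nat \<Rightarrow> 'v) \<Rightarrow> (nat \<Rightarrow> 'v) \<Rightarrow> 'v \<Rightarrow> 'v \<Rightarrow> 'v \<Rightarrow> 'v" where
  "child_matching a b u u' = (SOME \<beta>. bij_betw \<beta> (children u) (children u') \<and>
      (\<forall>i. u = a i \<and> u' = b i \<longrightarrow> \<beta> (a (Suc i)) = b (Suc i)))"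

lemma child_matching:
  assumes a: "is_ray E a" "a 0 = o'" and b: "is_ray E b" "b 0 = o'"
    and level: "tdist E o' u = tdist E o' u'"
  shows "bij_betw (child_matching a b u u') (children u) (children u')"
    and "\<And>i. u = a i \<Longrightarrow> u' = b i \<Longrightarrow> child_matching a b u u' (a (Suc i)) = b (Suc i)"
proof -
  have "u = o' \<longleftrightarrow> u' = o'" using level tdist_eq_0_iff by metis
  then have "card (children u) = card (children u')" by (simp add: card_children)
  note cards = finite_children finite_children this
  have "\<exists>\<beta>. bij_betw \<beta> (children u) (children u') \<and>
      (\<forall>i. u = a i \<and> u' = b i \<longrightarrow> \<beta> (a (Suc i)) = b (Suc i))"
  proof (cases "\<exists>i. u = a i \<and> u' = b i")
    case True
    then obtain i where i: "u = a i" "u' = b i" by blast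
    have "a (Suc i) \<in> children u" "b (Suc i) \<in> children u'"
      using ray_from_root(2)[OF a] ray_from_root(2)[OF b] i by auto
    then obtain \<beta> where \<beta>: "bij_betw \<beta> (children u) (children u')" "\<beta> (a (Suc i)) = b (Suc i)"
      using finite_same_card_bij_betw_point[OF cards] by blast
    moreover have "j = i" if "u = a j" for j
      using i that inj_ray[OF a(1)] by (simp add: inj_eq)
    ultimately show ?thesis by blast
  next
    case False
    then show ?thesis using finite_same_card_bij[OF cards] by blast
  qed
  then have "bij_betw (child_matching a b u u') (children u) (children u') \<and>
      (\<forall>i. u = a i \<and> u' = b i \<longrightarrow> child_matching a b u u' (a (Suc i)) = b (Suc i))"
    unfolding child_matching_def by (rule someI_ex)
  then show "bij_betw (child_matching a b u u') (children u) (children u')"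
    and "\<And>i. u = a i \<Longrightarrow> u' = b i \<Longrightarrow> child_matching a b u u' (a (Suc i)) = b (Suc i)"
    by blast+
qed

primrec ray_iso_level :: "(nat \<Rightarrow> 'v) \<Rightarrow> (nat \<Rightarrow> 'v) \<Rightarrow> nat \<Rightarrow> 'v \<Rightarrow> 'v" where
  "ray_iso_level a b 0 v = o'"
| "ray_iso_level a b (Suc n) v =
     child_matching a b (parent v) (ray_iso_level a b n (parent v)) v"

definition ray_iso :: "(nat \<Rightarrow> 'v) \<Rightarrow> (nat \<Rightarrow> 'v) \<Rightarrow> 'v \<Rightarrow> 'v" where
  "ray_iso a b v = ray_iso_level a b (tdist E o' v) v"

lemma ray_iso_root: "ray_iso a b o' = o'"
  unfolding ray_iso_def by simp

lemma ray_iso_step: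
  assumes "v \<noteq> o'"
  shows "ray_iso a b v = child_matching a b (parent v) (ray_iso a b (parent v)) v"
proof -
  have "tdist E o' v = Suc (tdist E o' (parent v))" using tdist_parent[OF assms] by simp
  then show ?thesis unfolding ray_iso_def by simp
qed

context
  fixes a b assumes a: "is_ray E a" "a 0 = o'" and b: "is_ray E b" "b 0 = o'"
begin

lemma tdist_ray_iso: "tdist E o' (ray_iso a b v) = tdist E o' v"
proof (induction "tdist E o' v" arbitrary: v)
  case 0
  then show ?case using tdist_eq_0_iff ray_iso_root by simp
next
  case (Suc n)
  then have v: "v \<noteq> o'" using tdist_eq_0_iff by force
  define u where "u = parent v"
  have "tdist E o' u = n" using tdist_parent[OF v] Suc.hyps u_def by simp
  then have level: "tdist E o' (ray_iso a b u) = tdist E o' u" using Suc.hyps(1) by simp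
  have "v \<in> children u" using mem_children_iff v u_def by blast
  then have "ray_iso a b v \<in> children (ray_iso a b u)"
    using child_matching(1)[OF a b level[symmetric]] ray_iso_step[OF v] u_def bij_betwE by fastforce
  then show ?case using level Suc.hyps(2) \<open>tdist E o' u = n\<close> unfolding children_def by simp
qed

lemma bij_betw_ray_iso_children:
  "bij_betw (child_matching a b u (ray_iso a b u)) (children u) (children (ray_iso a b u))"
  using child_matching(1)[OF a b tdist_ray_iso[symmetric]] .

lemma
  assumes "v \<noteq> o'"
  shows ray_iso_ne_root: "ray_iso a b v \<noteq> o'"
    and parent_ray_iso: "parent (ray_iso a b v) = ray_iso a b (parent v)"
proof -
  have "v \<in> children (parent v)" using mem_children_iff assms by blast
  then have "ray_iso a b v \<in> children (ray_iso a b (parent v))"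
    using bij_betw_ray_iso_children ray_iso_step[OF assms] bij_betwE by fastforce
  then show "ray_iso a b v \<noteq> o'" "parent (ray_iso a b v) = ray_iso a b (parent v)"
    using mem_children_iff by blast+
qed

lemma inj_ray_iso: "inj (ray_iso a b)"
proof -
  have by_level: "\<forall>v w. tdist E o' v = n \<longrightarrow> ray_iso a b v = ray_iso a b w \<longrightarrow> v = w" for n
  proof (induction n)
    case 0
    show ?case
    proof (intro allI impI)
      fix v w assume "tdist E o' v = 0" and eq: "ray_iso a b v = ray_iso a b w"
      then have "v = o'" using tdist_eq_0_iff by simp
      then have "tdist E o' w = 0" using eq tdist_ray_iso[of w] ray_iso_root by simp
      then show "v = w" using \<open>v = o'\<close> tdist_eq_0_iff by simp
    qed
  next
    case (Suc n)
    show ?case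
    proof (intro allI impI)
      fix v w assume v: "tdist E o' v = Suc n" and eq: "ray_iso a b v = ray_iso a b w"
      then have w: "tdist E o' w = Suc n" using tdist_ray_iso[of v] tdist_ray_iso[of w] by simp
      have vw: "v \<noteq> o'" "w \<noteq> o'" using v w tdist_eq_0_iff by auto
      have "tdist E o' (parent v) = n" using tdist_parent[OF vw(1)] v by simp
      moreover have "ray_iso a b (parent v) = ray_iso a b (parent w)"
        using parent_ray_iso[OF vw(1)] parent_ray_iso[OF vw(2)] eq by simp
      ultimately have same_parent: "parent v = parent w" using Suc.IH by blast
      define u where "u = parent v"
      have "v \<in> children u" "w \<in> children u"
        using mem_children_iff vw same_parent u_def by auto
      moreover have "child_matching a b u (ray_iso a b u) v = child_matching a b u (ray_iso a b u) w"
        using ray_iso_step[OF vw(1)] ray_iso_step[OF vw(2)] eq same_parent u_def by simp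
      ultimately show "v = w"
        using bij_betw_ray_iso_children[of u] unfolding bij_betw_def inj_on_def by blast
    qed
  qed
  show ?thesis
  proof (rule injI)
    fix v w assume "ray_iso a b v = ray_iso a b w"
    then show "v = w" using by_level[of "tdist E o' v"] by blast
  qed
qed

lemma surj_ray_iso: "surj (ray_iso a b)"
proof -
  have by_level: "\<forall>w. tdist E o' w = n \<longrightarrow> w \<in> range (ray_iso a b)" for n
  proof (induction n)
    case 0
    have "o' \<in> range (ray_iso a b)" using ray_iso_root[of a b] by (intro range_eqI[of _ _ o']) simp
    then show ?case using tdist_eq_0_iff[of o'] by metis
  next
    case (Suc n)
    show ?case
    proof (intro allI impI)
      fix w assume w: "tdist E o' w = Suc n"
      then have wo: "w \<noteq> o'" using tdist_eq_0_iff by auto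
      have "tdist E o' (parent w) = n" using tdist_parent[OF wo] w by simp
      then have "parent w \<in> range (ray_iso a b)" using Suc.IH by blast
      then obtain u where u: "parent w = ray_iso a b u" by blast
      then have "w \<in> children (ray_iso a b u)" using wo by (simp add: mem_children_iff)
      then have "w \<in> child_matching a b u (ray_iso a b u) ` children u"
        using bij_betw_ray_iso_children[of u] by (simp add: bij_betw_def)
      then obtain v where v: "v \<in> children u" "child_matching a b u (ray_iso a b u) v = w" by blast
      moreover have "v \<noteq> o'" "parent v = u" using v(1) mem_children_iff by blast+
      ultimately have "ray_iso a b v = w" using ray_iso_step[of v] by simp
      then show "w \<in> range (ray_iso a b)" by blast
    qed
  qed
  have "w \<in> range (ray_iso a b)" for w using by_level[of "tdist E o' w"] by blast
  then show ?thesis by (rule sym[OF UNIV_eq_I])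
qed

lemma ray_iso_adj: "E x y \<longleftrightarrow> E (ray_iso a b x) (ray_iso a b y)"
proof -
  have "(y \<noteq> o' \<and> parent y = x) \<longleftrightarrow>
      (ray_iso a b y \<noteq> o' \<and> parent (ray_iso a b y) = ray_iso a b x)" (is "?P x y \<longleftrightarrow> ?Q x y")
    for x y
  proof (cases "y = o'")
    case True
    then show ?thesis using ray_iso_root by simp
  next
    case False
    then show ?thesis
      using ray_iso_ne_root[OF False] parent_ray_iso[OF False] inj_ray_iso by (simp add: inj_eq)
  qed
  then have "?P x y \<or> ?P y x \<longleftrightarrow> ?Q x y \<or> ?Q y x" by blast
  then show ?thesis using adj_iff_parent[of x y] adj_iff_parent[of "ray_iso a b x" "ray_iso a b y"] by blast
qed

lemma ray_iso_aut: "ray_iso a b \<in> Aut E"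
  unfolding Aut_def bij_def using inj_ray_iso surj_ray_iso ray_iso_adj by blast

lemma ray_iso_ray: "ray_iso a b (a i) = b i"
proof (induction i)
  case 0
  then show ?case using a b ray_iso_root by simp
next
  case (Suc i)
  have "a (Suc i) \<noteq> o'" "parent (a (Suc i)) = a i"
    using ray_from_root(2)[OF a] mem_children_iff by blast+
  then have "ray_iso a b (a (Suc i)) = child_matching a b (a i) (b i) (a (Suc i))"
    using ray_iso_step[of "a (Suc i)"] Suc.IH by simp
  also have "\<dots> = b (Suc i)"
    using child_matching(2)[OF a b] ray_from_root(1)[OF a] ray_from_root(1)[OF b] by simp
  finally show ?case .
qed

end

end

lemma stabiliser_transitive_on_boundary:
  assumes \<omega>: "\<omega> \<in> boundary E" and \<omega>': "\<omega>' \<in> boundary E"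
  shows "\<exists>k\<in>Aut E. k o' = o' \<and> bact k \<omega> = \<omega>'"
proof -
  define a where "a = ray_from o' \<omega>"
  define b where "b = ray_from o' \<omega>'"
  have a: "is_ray E a" "a 0 = o'" "a \<in> \<omega>"
    unfolding a_def using ray_from_in_boundary ray_from_0 is_ray_ray_from \<omega> by auto
  have b: "is_ray E b" "b 0 = o'" "b \<in> \<omega>'"
    unfolding b_def using ray_from_in_boundary ray_from_0 is_ray_ray_from \<omega>' by auto
  let ?k = "ray_iso o' a b"
  have k: "?k \<in> Aut E" "?k o' = o'" using ray_iso_aut[OF a(1,2) b(1,2)] ray_iso_root by auto
  have "?k \<circ> a = b" using ray_iso_ray[OF a(1,2) b(1,2)] by auto
  then have "b \<in> bact ?k \<omega>" using comp_in_bact[OF a(3)] by metis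
  then have "bact ?k \<omega> = \<omega>'" using boundary_eqI[OF bact_boundary[OF k(1) \<omega>] \<omega>'] b(3) by blast
  then show ?thesis using k by blast
qed

end

locale radon_setting =
  fixes q :: nat and E :: "'v \<Rightarrow> 'v \<Rightarrow> bool" and o' :: 'v
    and \<omega>m \<omega>p :: "(nat \<Rightarrow> 'v) set" and t r :: "'v \<Rightarrow> 'v"
  assumes standard_setting: "standard_setting q E o' \<omega>m \<omega>p t r"

sublocale radon_setting \<subseteq> regular_tree_graph E q
  using standard_setting unfolding standard_setting_def by unfold_locales blast

context radon_setting
begin

lemma boundary_ends: "\<omega>m \<in> boundary E" "\<omega>p \<in> boundary E"
  and o_on_geodesic: "o' \<in> geodesic E \<omega>m \<omega>p"
  and tau_aut: "t \<in> Aut E"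
  and tau_fixes_ends: "bact t \<omega>m = \<omega>m" "bact t \<omega>p = \<omega>p"
  and tau_translates: "x \<in> geodesic E \<omega>m \<omega>p \<Longrightarrow> E x (t x) \<and> t x \<in> range (ray_from x \<omega>p)"
  and r_aut: "r \<in> Aut E" and r_fixes_o: "r o' = o'"
  and r_conj_ipow: "r \<circ> ipow t j \<circ> inv r = ipow t (- j)"
  using standard_setting unfolding standard_setting_def Kgrp_def by auto

definition axis :: "int \<Rightarrow> 'v" where
  "axis = (SOME p. is_line p \<and> (\<lambda>n. p (int n)) \<in> \<omega>p \<and> (\<lambda>n. p (- int n)) \<in> \<omega>m \<and> p 0 = o')"

lemma axis: "is_line axis" "(\<lambda>n. axis (int n)) \<in> \<omega>p" "(\<lambda>n. axis (- int n)) \<in> \<omega>m" "axis 0 = o'"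
proof -
  obtain p m where p: "is_line p" "(\<lambda>n. p (int n)) \<in> \<omega>p" "(\<lambda>n. p (- int n)) \<in> \<omega>m" "o' = p m"
    using o_on_geodesic unfolding geodesic_def is_line_def by blast
  have "(\<lambda>n. p (m + int n)) \<in> \<omega>p" using line_tail_in_boundary[OF boundary_ends(2) p(1,2)] .
  moreover have "(\<lambda>n. p (m - int n)) \<in> \<omega>m"
    using line_tail_in_boundary[OF boundary_ends(1) is_line_reverse[OF p(1)], of "- m"] p(3) by simp
  moreover have "is_line (\<lambda>i. p (m + i))" using is_line_shift[OF p(1)] .
  ultimately have "\<exists>p. is_line p \<and> (\<lambda>n. p (int n)) \<in> \<omega>p \<and> (\<lambda>n. p (- int n)) \<in> \<omega>m \<and> p 0 = o'"
    using p(4) by (intro exI[of _ "\<lambda>i. p (m + i)"]) simp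
  from someI_ex[OF this] show "is_line axis" "(\<lambda>n. axis (int n)) \<in> \<omega>p"
    "(\<lambda>n. axis (- int n)) \<in> \<omega>m" "axis 0 = o'"
    unfolding axis_def by blast+
qed

lemma axis_geodesic: "axis i \<in> geodesic E \<omega>m \<omega>p"
  unfolding geodesic_def using axis(1-3) unfolding is_line_def by blast

lemma ray_from_axis: "ray_from (axis i) \<omega>p = (\<lambda>n. axis (i + int n))"
  using ray_from_eq[OF boundary_ends(2) line_tail_in_boundary[OF boundary_ends(2) axis(1,2)]] by simp

lemma ray_from_o_minus: "ray_from o' \<omega>m = (\<lambda>n. axis (- int n))"
  using ray_from_eq[OF boundary_ends(1) axis(3)] axis(4) by simp

lemma tau_axis: "t (axis i) = axis (i + 1)"
proof -
  have step: "E (axis i) (t (axis i))" "t (axis i) \<in> range (ray_from (axis i) \<omega>p)"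
    using tau_translates[OF axis_geodesic] by auto
  then obtain m where m: "t (axis i) = axis (i + int m)" using ray_from_axis by auto
  have "tdist E (axis i) (axis (i + int m)) = m"
    using tdist_ray_0[OF is_ray_line[OF axis(1)], of i m] by simp
  then have "m = 1" using m tdist_adj[OF step(1)] by simp
  then show ?thesis using m by simp
qed

lemma ipow_tau_axis: "ipow t j (axis i) = axis (i + j)"
  using ipow_translate[where p = axis, OF bij_aut[OF tau_aut] tau_axis] .

lemma horo_ipow_tau: "horo E o' (ipow t j o') \<omega>p = j"
proof -
  have "\<forall>n. ray_from o' \<omega>p (n + nat j) = ray_from (ipow t j o') \<omega>p (n + nat (- j))"
    using ray_from_axis[of 0] ray_from_axis[of j] ipow_tau_axis[of j 0] axis(4)
    by (simp add: algebra_simps)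
  from horo_eq_offset[OF boundary_ends(2) this] show ?thesis by simp
qed

lemma r_comp_ipow: "r \<circ> ipow t j = ipow t (- j) \<circ> r"
  using r_conj_ipow[of j] inv_comp_aut[OF r_aut] by (metis comp_assoc comp_id)

lemma bact_r: "bact r \<omega>p = \<omega>m"
proof -
  have "r (ray_from o' \<omega>p n) = ray_from o' \<omega>m n" for n
  proof -
    have "r (ray_from o' \<omega>p n) = r (ipow t (int n) o')"
      using ray_from_axis[of 0] ipow_tau_axis[of "int n" 0] axis(4) by simp
    also have "\<dots> = ipow t (- int n) o'" using fun_cong[OF r_comp_ipow] r_fixes_o by simp
    finally show ?thesis using ipow_tau_axis[of "- int n" 0] axis(4) ray_from_o_minus by simp
  qed
  then have "ray_from o' \<omega>m \<in> bact r \<omega>p"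
    using comp_in_bact[OF ray_from_in_boundary[OF boundary_ends(2)]] by (metis comp_apply ext)
  then show ?thesis
    using boundary_eqI[OF bact_boundary[OF r_aut boundary_ends(2)] boundary_ends(1)]
      ray_from_in_boundary[OF boundary_ends(1)] by blast
qed

section \<open>The Iwasawa height\<close>

lemma iwasawa_height:
  assumes k: "k \<in> Kgrp E o'" and n: "n \<in> Bgrp E \<omega>p" and g: "g = k \<circ> n \<circ> ipow t j"
  shows "j = horo E o' (g o') (bact g \<omega>p)"
proof -
  have k: "k \<in> Aut E" "k o' = o'" using k unfolding Kgrp_def by auto
  obtain x where n: "n \<in> Aut E" "bact n \<omega>p = \<omega>p" "n x = x" using n unfolding Bgrp_def by auto
  have "bact g \<omega>p = bact k \<omega>p"
    using g n(2) bact_ipow[OF tau_aut tau_fixes_ends(2)] by (simp add: bact_comp)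
  then have "horo E o' (g o') (bact g \<omega>p) = horo E o' (n (ipow t j o')) (bact n \<omega>p)"
    using horo_stabiliser[OF k boundary_ends(2)] g n(2) by simp
  also have "\<dots> = horo E o' (ipow t j o') \<omega>p + horo E o' (n o') \<omega>p"
    using horo_cocycle[OF n(1) boundary_ends(2), of o' "ipow t j o'"] n(2) by simp
  also have "\<dots> = j"
    using horo_ipow_tau horo_fixed_point[OF n(1) n(3) boundary_ends(2) n(2)] by simp
  finally show ?thesis by simp
qed

lemma iwasawa_decomposition:
  assumes g: "g \<in> Aut E"
  shows "\<exists>k\<in>Kgrp E o'. \<exists>n\<in>Bgrp E \<omega>p. g = k \<circ> n \<circ> ipow t (horo E o' (g o') (bact g \<omega>p))"
proof -
  define J where "J = horo E o' (g o') (bact g \<omega>p)"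
  have g\<omega>: "bact g \<omega>p \<in> boundary E" using bact_boundary[OF g boundary_ends(2)] .
  obtain k where k: "k \<in> Aut E" "k o' = o'" "bact k \<omega>p = bact g \<omega>p"
    using stabiliser_transitive_on_boundary[OF boundary_ends(2) g\<omega>] by blast
  have k': "inv k \<in> Aut E" "inv k o' = o'"
    using aut_inv[OF k(1)] inv_f_eq[OF bij_is_inj[OF bij_aut[OF k(1)]] k(2)] by auto
  define n where "n = inv k \<circ> g \<circ> ipow t (- J)"
  have n_aut: "n \<in> Aut E" unfolding n_def by (intro aut_comp k'(1) g aut_ipow tau_aut)
  have n_fixes: "bact n \<omega>p = \<omega>p"
    using bact_ipow[OF tau_aut tau_fixes_ends(2)] k(3)[symmetric] bact_inv_cancel[OF k(1)]
    unfolding n_def by (simp add: bact_comp)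
  have "horo E o' (n o') \<omega>p = horo E o' (inv k (g (ipow t (- J) o'))) (bact (inv k) (bact g \<omega>p))"
    using k(3)[symmetric] bact_inv_cancel[OF k(1)] unfolding n_def by simp
  also have "\<dots> = horo E o' (ipow t (- J) o') \<omega>p + J"
    using horo_stabiliser[OF k' g\<omega>] horo_cocycle[OF g boundary_ends(2), of o' "ipow t (- J) o'"]
    unfolding J_def by simp
  finally have "horo E o' (n o') \<omega>p = 0" using horo_ipow_tau by simp
  then obtain x where "n x = x" using fixed_point_if_horo_zero[OF n_aut boundary_ends(2) n_fixes] by blast
  then have "n \<in> Bgrp E \<omega>p" unfolding Bgrp_def using n_aut n_fixes by blast
  moreover have "k \<in> Kgrp E o'" unfolding Kgrp_def using k by blast
  moreover have "k \<circ> n \<circ> ipow t J = (k \<circ> inv k) \<circ> g \<circ> (ipow t (- J) \<circ> ipow t J)"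
    unfolding n_def by (simp add: comp_assoc)
  then have "k \<circ> n \<circ> ipow t J = g"
    using comp_inv_aut[OF k(1)] ipow_uminus_comp[OF bij_aut[OF tau_aut], of J] by simp
  ultimately show ?thesis unfolding J_def by metis
qed

lemma Hfun_eq_horo:
  assumes "g \<in> Aut E" shows "Hfun E o' \<omega>p t g = horo E o' (g o') (bact g \<omega>p)"
  unfolding Hfun_def using iwasawa_decomposition[OF assms] iwasawa_height
  by (intro the_equality) blast+

lemma Hfun_comp:
  assumes c: "c \<in> Aut E" and h: "h \<in> Aut E"
  shows "Hfun E o' \<omega>p t (c \<circ> h) = Hfun E o' \<omega>p t h + horo E o' (c o') (bact (c \<circ> h) \<omega>p)"
  using Hfun_eq_horo[OF aut_comp[OF c h]] Hfun_eq_horo[OF h]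
    horo_cocycle[OF c bact_boundary[OF h boundary_ends(2)], of o' "h o'"]
  by (simp add: bact_comp)

lemma dfun_left_translate:
  assumes \<gamma>: "\<gamma> \<in> Aut E" and g: "g \<in> Aut E"
  shows "dfun q E o' \<omega>p t r s s' (g \<circ> ipow t j) =
    complex_of_real (real q) powr ((1/2 + \<i> * s) * of_int (horo E o' (\<gamma> o') (bact g \<omega>p))) *
    complex_of_real (real q) powr ((1/2 + \<i> * s') * of_int (horo E o' (\<gamma> o') (bact g \<omega>m))) *
    dfun q E o' \<omega>p t r s s' (inv \<gamma> \<circ> g \<circ> ipow t j)"
proof -
  define h where "h = inv \<gamma> \<circ> g \<circ> ipow t j"
  have h: "h \<in> Aut E" unfolding h_def by (intro aut_comp aut_inv \<gamma> g aut_ipow tau_aut)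
  have \<gamma>h: "\<gamma> \<circ> h = g \<circ> ipow t j" unfolding h_def using comp_inv_aut[OF \<gamma>] by (simp add: comp_assoc[symmetric])
  have "bact (g \<circ> ipow t j) \<omega>p = bact g \<omega>p"
    using bact_ipow[OF tau_aut tau_fixes_ends(2)] by (simp add: bact_comp)
  then have H: "Hfun E o' \<omega>p t (g \<circ> ipow t j) = Hfun E o' \<omega>p t h + horo E o' (\<gamma> o') (bact g \<omega>p)"
    using Hfun_comp[OF \<gamma> h] \<gamma>h by simp
  have "bact (g \<circ> ipow t j \<circ> r) \<omega>p = bact g \<omega>m"
    using bact_ipow[OF tau_aut tau_fixes_ends(1)] bact_r by (simp add: bact_comp)
  moreover have "\<gamma> \<circ> (h \<circ> r) = g \<circ> ipow t j \<circ> r" using \<gamma>h by (simp add: comp_assoc[symmetric])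
  ultimately have Hr: "Hfun E o' \<omega>p t (g \<circ> ipow t j \<circ> r) =
      Hfun E o' \<omega>p t (h \<circ> r) + horo E o' (\<gamma> o') (bact g \<omega>m)"
    using Hfun_comp[OF \<gamma> aut_comp[OF h r_aut]] by simp
  show ?thesis unfolding dfun_def H Hr powr_of_int_add h_def[symmetric] by (simp add: ac_simps)
qed

end

lemma ltrans_cosetM: "ltrans \<gamma> f (cosetM M g) = f (cosetM M (inv \<gamma> \<circ> g))"
  unfolding ltrans_def cosetM_def by (simp add: image_image comp_assoc)

theorem proposition3p6:
  fixes q :: nat and E :: "'v \<Rightarrow> 'v \<Rightarrow> bool" and o' :: 'v
    and \<omega>m \<omega>p :: "(nat \<Rightarrow> 'v) set" and t r \<gamma> g :: "'v \<Rightarrow> 'v"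
    and s s' :: complex and f :: "('v \<Rightarrow> 'v) set \<Rightarrow> complex"
  assumes "standard_setting q E o' \<omega>m \<omega>p t r"
    and "f \<in> Cclc E (Mgrp E o' \<omega>m \<omega>p)"
    and "\<gamma> \<in> Aut E" and "g \<in> Aut E"
  shows "radon q E o' \<omega>m \<omega>p t r s s' (ltrans \<gamma> f) g =
           complex_of_real (real q) powr ((1/2 + \<i> * s) * of_int (horo E o' (\<gamma> o') (bact g \<omega>p))) *
           complex_of_real (real q) powr ((1/2 - \<i> * cnj s') * of_int (horo E o' (\<gamma> o') (bact g \<omega>m))) *
           radon q E o' \<omega>m \<omega>p t r s s' f (inv \<gamma> \<circ> g)"
proof -
  interpret radon_setting q E o' \<omega>m \<omega>p t r by unfold_locales (rule assms(1))
  define M where "M = Mgrp E o' \<omega>m \<omega>p"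
  define C where "C = complex_of_real (real q) powr ((1/2 + \<i> * s) * of_int (horo E o' (\<gamma> o') (bact g \<omega>p))) *
           complex_of_real (real q) powr ((1/2 - \<i> * cnj s') * of_int (horo E o' (\<gamma> o') (bact g \<omega>m)))"
  have summand: "ltrans \<gamma> f (cosetM M (g \<circ> ipow t j)) * dfun q E o' \<omega>p t r s (- cnj s') (g \<circ> ipow t j) =
     C * (f (cosetM M (inv \<gamma> \<circ> g \<circ> ipow t j)) * dfun q E o' \<omega>p t r s (- cnj s') (inv \<gamma> \<circ> g \<circ> ipow t j))"
    for j
    using dfun_left_translate[OF assms(3,4), of s "- cnj s'" j] ltrans_cosetM[of \<gamma> f M "g \<circ> ipow t j"]
    unfolding C_def by (simp add: comp_assoc ac_simps)
  show ?thesis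
    unfolding radon_def M_def[symmetric] C_def[symmetric] comp_assoc summand by (rule infsum_cmult_right')
qed

end
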